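(* Let $f\in\mathcal{F}$ be $n$-ary and let $\varphi_1(x,\vec y),\dots,\varphi_n(x,\vec y)$ be terms of $\mathbf{A}^{\natural}$. Then for every $a\in A$ and every tuple $\vec c$ of elements of $A^{\natural}$, $f(\varphi_1,\dots,\varphi_n)(a^1,\vec c)=f(\varphi_1,\dots,\varphi_n)(a^3,\vec c)$.
   Context: $\mathbf{A}$ is a fixed non-trivial algebra whose set $\mathcal{F}$ of basic operations contains no constant symbols, and $h$ is a unary function on $A$. Construction of $\mathbf{A}^{\natural}$: universe is the disjoint union of eight copies $A_1,\dots,A_8$ of $A$ ($a^i$ is the copy of $a$ in $A_i$); operations: each $n$-ary $f\in\mathcal{F}$ with $f(a_1^{m_1},\dots,a_n^{m_n})=(f^{\mathbf{A}}(a_1,\dots,a_n))^5$; a ternary $\heartsuit$ with $\heartsuit(a^m,b^n,c^k)=a^1$ if $a^m=c^k$, $h(a)^5=b^n$, $m\in\{1,3,4\}$; $=a^2$ if $a^m=c^k$, $h(a)^5=b^n$, $m\in\{2,5,6,7,8\}$; $=a^4$ if $m,k\in\{1,3,4\}$ and ($a^m\ne c^k$ or $h(a)^5\ne b^n$); $=a^7$ if $\{m,k\}\cap\{2,5,6,7,8\}\ne\emptyset$ and ($a^m\ne c^k$ or $h(a)^5\ne b^n$); a unary $\Box$ with $\Box(a^m)=a^m$ for $m\in\{1,2\}$, $a^{m-1}$ for even $m\ge3$, $a^{m+1}$ for odd $m\ge3$. *)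

theory Defs
  imports Main
begin

text \<open>The algebra A has universe the type 'a; its basic operation symbols form the set
  F :: 'f set with arities ar :: 'f => nat and interpretations I :: 'f => 'a list => 'a.
  An element a^m of A-natural is represented as the pair (a, m) with m in {1..8}.\<close>

definition in_nat_univ :: "'a \<times> nat \<Rightarrow> bool" where
  "in_nat_univ p \<longleftrightarrow> snd p \<in> {1..8}"

definition heart :: "('a \<Rightarrow> 'a) \<Rightarrow> 'a \<times> nat \<Rightarrow> 'a \<times> nat \<Rightarrow> 'a \<times> nat \<Rightarrow> 'a \<times> nat" where
  "heart h x y z = (case x of (a, m) \<Rightarrow> (case z of (c, k) \<Rightarrow>
     if x = z \<and> (h a, 5) = y then
       (if m \<in> {1,3,4} then (a, 1) else (a, 2))
     else if m \<in> {1,3,4} \<and> k \<in> {1,3,4} then (a, 4)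
     else (a, 7)))"

definition box :: "'a \<times> nat \<Rightarrow> 'a \<times> nat" where
  "box x = (case x of (a, m) \<Rightarrow>
     if m \<in> {1,2} then (a, m)
     else if even m then (a, m - 1) else (a, m + 1))"

datatype 'f nterm = Var nat | Op 'f "'f nterm list"
  | Heart "'f nterm" "'f nterm" "'f nterm" | Box "'f nterm"

fun wf_term :: "'f set \<Rightarrow> ('f \<Rightarrow> nat) \<Rightarrow> 'f nterm \<Rightarrow> bool" where
  "wf_term F ar (Var i) = True"
| "wf_term F ar (Op g ts) = (g \<in> F \<and> length ts = ar g \<and> (\<forall>t\<in>set ts. wf_term F ar t))"
| "wf_term F ar (Heart s t u) = (wf_term F ar s \<and> wf_term F ar t \<and> wf_term F ar u)"
| "wf_term F ar (Box t) = wf_term F ar t"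

fun eval :: "('f \<Rightarrow> 'a list \<Rightarrow> 'a) \<Rightarrow> ('a \<Rightarrow> 'a) \<Rightarrow> (nat \<Rightarrow> 'a \<times> nat) \<Rightarrow> 'f nterm \<Rightarrow> 'a \<times> nat" where
  "eval I h \<rho> (Var i) = \<rho> i"
| "eval I h \<rho> (Op g ts) = (I g (map (\<lambda>t. fst (eval I h \<rho> t)) ts), 5)"
| "eval I h \<rho> (Heart s t u) = heart h (eval I h \<rho> s) (eval I h \<rho> t) (eval I h \<rho> u)"
| "eval I h \<rho> (Box t) = box (eval I h \<rho> t)"

end

theory Submission
  imports Defs
begin

text \<open>Neither \<open>\<heartsuit>\<close> nor \<open>\<box>\<close> changes the underlying element \<open>a\<close> of its first argument
  \<open>a\<^sup>m\<close>, and a basic operation reads only the underlying elements of its arguments. Hence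
  the underlying element of the value of any term depends only on the underlying elements
  of the assignment, and a term headed by a basic operation \<open>f\<close> always lands in the fifth
  copy. So its value cannot distinguish \<open>a\<^sup>1\<close> from \<open>a\<^sup>3\<close>.\<close>

lemma fst_heart [simp]: "fst (heart h x y z) = fst x"
  unfolding heart_def by (auto split: prod.splits)

lemma fst_box [simp]: "fst (box x) = fst x"
  unfolding box_def by (auto split: prod.splits)

lemma fst_eval_cong:
  assumes "fst \<circ> \<rho> = fst \<circ> \<sigma>"
  shows "fst (eval I h \<rho> t) = fst (eval I h \<sigma> t)"
proof (induction t)
  case (Var i)
  then show ?case using assms by (simp add: fun_eq_iff)
next
  case (Op g ts)
  then show ?case by (simp cong: map_cong)
qed simp_all

lemma eval_Op_cong:
  assumes "fst \<circ> \<rho> = fst \<circ> \<sigma>"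
  shows "eval I h \<rho> (Op f ts) = eval I h \<sigma> (Op f ts)"
  by (simp add: fst_eval_cong[OF assms])

text \<open>None of the hypotheses on \<open>A\<close>, \<open>f\<close>, the terms or the assignment is needed.\<close>

theorem corollary6p6:
  fixes F :: "'f set" and ar :: "'f \<Rightarrow> nat" and I :: "'f \<Rightarrow> 'a list \<Rightarrow> 'a"
    and h :: "'a \<Rightarrow> 'a" and f :: 'f and \<phi>s :: "'f nterm list"
    and a :: 'a and \<rho> :: "nat \<Rightarrow> 'a \<times> nat"
  assumes nontrivial: "\<exists>x y :: 'a. x \<noteq> y"
    and no_constants: "\<forall>g\<in>F. ar g > 0"
    and f_in: "f \<in> F"
    and len: "length \<phi>s = ar f"
    and wf: "\<forall>\<phi>\<in>set \<phi>s. wf_term F ar \<phi>"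
    and env: "\<forall>i. in_nat_univ (\<rho> i)"
  shows "eval I h (\<rho>(0 := (a, 1))) (Op f \<phi>s) = eval I h (\<rho>(0 := (a, 3))) (Op f \<phi>s)"
proof (rule eval_Op_cong)
  show "fst \<circ> \<rho>(0 := (a, 1)) = fst \<circ> \<rho>(0 := (a, 3))"
    by (simp add: fun_eq_iff)
qed

end
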